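(* Fix $n\ge1$ and real coefficients $a^{\pm}_{i,j},b^{\pm}_{i,j}$ ($i+j\le n$), with $p^{\pm}=\sum_{i+j=0}^n a^{\pm}_{i,j}x^iy^j$, $q^{\pm}=\sum_{i+j=0}^n b^{\pm}_{i,j}x^iy^j$. Then there exist real polynomials $\alpha(h),\beta(h),\gamma(h)$ with $\deg\alpha\le\left[\frac n2\right]$, $\deg\gamma\le\left[\frac n2\right]$, $\deg\beta\le\left[\frac n2\right]-1$, real polynomials $\Psi_{k,m}(h)$ ($2\le k\le n$, $0\le m\le 3[\frac k2]-3$) with $\deg\Psi_{k,m}\le\left[\frac k2\right]-1-\left[\frac{m+2}{3}\right]$, and a real polynomial $\Phi(u)$ of degree at most $3n+\frac{5+(-1)^n}{2}$, such that for all $h\in(0,+\infty)$ $$M(h)=\alpha(h)J_{0,0}(h)+\beta(h)J_{1,1}(h)+\gamma(h)J_{0,1}(h)+\sum_{k=2}^{n}\sum_{m=0}^{3[\frac k2]-3}\Psi_{k,m}(h)\,\sigma(h)^{7+2m}+\Phi(\sigma(h)).$$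
   Context: For $h>0$, $\sigma(h)$ denotes the unique positive solution $s$ of $s^2+s^6=h$; the circle $x^2+y^2=h$ meets $y=x^3$ exactly at $A_h=(-\sigma(h),-\sigma(h)^3)$ and $B_h=(\sigma(h),\sigma(h)^3)$. $L_h^+$ is the arc of the circle $x^2+y^2=h$ in $\{y\ge x^3\}$, oriented clockwise from $A_h$ to $B_h$; $L_h^-$ is the arc in $\{y\le x^3\}$, oriented clockwise from $B_h$ to $A_h$. $J_{i,j}(h)=\int_{L_h^+}x^iy^j\,dx$. The first order Melnikov function is $M(h)=\int_{L_h^+}(q^+dx-p^+dy)+\int_{L_h^-}(q^-dx-p^-dy)$. $[\cdot]$ denotes the integer part; a polynomial with negative degree bound is zero, and empty sums are zero. *)

theory Defs
  imports "HOL-Analysis.Analysis" "HOL-Computational_Algebra.Polynomial"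
begin

definition sigma :: "real \<Rightarrow> real" where
  "sigma h = (THE s. s > 0 \<and> s^2 + s^6 = h)"

definition bipoly :: "nat \<Rightarrow> (nat \<Rightarrow> nat \<Rightarrow> real) \<Rightarrow> real \<Rightarrow> real \<Rightarrow> real" where
  "bipoly n c x y = (\<Sum>(i,j)\<in>{(i,j). i + j \<le> n}. c i j * x ^ i * y ^ j)"

definition line_int ::
  "(real \<Rightarrow> real \<Rightarrow> real) \<Rightarrow> (real \<Rightarrow> real \<Rightarrow> real) \<Rightarrow> (real \<Rightarrow> real \<times> real) \<Rightarrow> real" where
  "line_int P Q g = integral {0..1}
     (\<lambda>t. P (fst (g t)) (snd (g t)) * fst (vector_derivative g (at t))
        + Q (fst (g t)) (snd (g t)) * snd (vector_derivative g (at t)))"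

text \<open>Polar angle of B_h = (s, s^3); A_h = -B_h has angle pi + this.
  The circle x^2+y^2=h has radius sqrt h.\<close>
definition angB :: "real \<Rightarrow> real" where
  "angB h = arctan ((sigma h)^2)"

text \<open>L_h^+: clockwise from A_h (angle pi + angB) to B_h (angle angB), through (0, sqrt h).\<close>
definition Lplus :: "real \<Rightarrow> real \<Rightarrow> real \<times> real" where
  "Lplus h t = (sqrt h * cos (pi + angB h - t * pi), sqrt h * sin (pi + angB h - t * pi))"

text \<open>L_h^-: clockwise from B_h (angle angB) to A_h (angle angB - pi), through (0, -sqrt h).\<close>
definition Lminus :: "real \<Rightarrow> real \<Rightarrow> real \<times> real" where
  "Lminus h t = (sqrt h * cos (angB h - t * pi), sqrt h * sin (angB h - t * pi))"

definition J :: "nat \<Rightarrow> nat \<Rightarrow> real \<Rightarrow> real" where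
  "J i j h = line_int (\<lambda>x y. x ^ i * y ^ j) (\<lambda>x y. 0) (Lplus h)"

definition melnikov ::
  "(real \<Rightarrow> real \<Rightarrow> real) \<Rightarrow> (real \<Rightarrow> real \<Rightarrow> real) \<Rightarrow>
   (real \<Rightarrow> real \<Rightarrow> real) \<Rightarrow> (real \<Rightarrow> real \<Rightarrow> real) \<Rightarrow> real \<Rightarrow> real" where
  "melnikov pp qp pm qm h =
     line_int qp (\<lambda>x y. - pp x y) (Lplus h) + line_int qm (\<lambda>x y. - pm x y) (Lminus h)"

text \<open>Degree bound allowing negative bounds (a polynomial with negative degree bound is 0).\<close>
definition deg_le :: "real poly \<Rightarrow> int \<Rightarrow> bool" where
  "deg_le p d \<longleftrightarrow> p = 0 \<or> int (degree p) \<le> d"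

end

theory Submission
  imports Defs
begin

text \<open>Parametrise both arcs by the clockwise angle. The moments \<open>\<integral> x^a y^b d\<theta>\<close> obey two
  reductions: the exact differential \<open>d(x^p y^q)\<close> and \<open>x^2 + y^2 = r^2\<close> lower the total degree
  \<open>a + b\<close> by two at the cost of a factor \<open>r^2 = \<sigma>^2 + \<sigma>^6\<close> and a boundary term. Because the two
  ends of each arc are the opposite points \<open>\<plusminus>(\<sigma>, \<sigma>^3)\<close>, boundary terms of even degree
  cancel and those of odd degree are monomials in \<open>\<sigma>\<close>. Hence a moment of even total degree is a constant
  multiple of \<open>\<pi> r^(a+b)\<close>, and one of odd total degree is a polynomial in \<open>\<sigma>\<close> of degree at most
  \<open>3(a+b)\<close>. As \<open>J_{0,1}(h) = \<pi> h / 2\<close>, the Melnikov function is \<open>\<gamma>(h) J_{0,1}(h) + \<Phi>(\<sigma>(h))\<close>, so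
  \<open>\<alpha>\<close>, \<open>\<beta>\<close> and all \<open>\<Psi>_{k,m}\<close> can be taken to be zero.\<close>

definition arc_x :: "real \<Rightarrow> real \<Rightarrow> real \<Rightarrow> real" where
  "arc_x c r t = r * cos (c - t * pi)"

definition arc_y :: "real \<Rightarrow> real \<Rightarrow> real \<Rightarrow> real" where
  "arc_y c r t = r * sin (c - t * pi)"

text \<open>With \<open>\<theta> = \<pi> t\<close> we have \<open>dx = y d\<theta>\<close> and \<open>dy = -x d\<theta>\<close> on the arc, so
  \<open>\<integral> x^i y^j dx\<close> and \<open>\<integral> x^i y^j dy\<close> are the moments \<open>(i, j+1)\<close> and \<open>-(i+1, j)\<close>.\<close>
definition arc_moment :: "real \<Rightarrow> real \<Rightarrow> nat \<Rightarrow> nat \<Rightarrow> real" where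
  "arc_moment c r a b = integral {0..1} (\<lambda>t. pi * arc_x c r t ^ a * arc_y c r t ^ b)"

definition arc_boundary :: "real \<Rightarrow> real \<Rightarrow> nat \<Rightarrow> nat \<Rightarrow> real" where
  "arc_boundary c r p q = arc_x c r 1 ^ p * arc_y c r 1 ^ q - arc_x c r 0 ^ p * arc_y c r 0 ^ q"

lemma arc_x_has_real_derivative: "(arc_x c r has_real_derivative pi * arc_y c r t) (at t)"
  unfolding arc_x_def arc_y_def by (auto intro!: derivative_eq_intros)

lemma arc_y_has_real_derivative: "(arc_y c r has_real_derivative - (pi * arc_x c r t)) (at t)"
  unfolding arc_x_def arc_y_def by (auto intro!: derivative_eq_intros)

lemma arc_x_0: "arc_x c r 0 = - arc_x c r 1" and arc_y_0: "arc_y c r 0 = - arc_y c r 1"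
  unfolding arc_x_def arc_y_def by simp_all

lemma arc_on_circle: "arc_x c r t ^ 2 + arc_y c r t ^ 2 = r ^ 2"
proof -
  have "arc_x c r t ^ 2 + arc_y c r t ^ 2 = r^2 * (sin (c - t*pi) ^ 2 + cos (c - t*pi) ^ 2)"
    unfolding arc_x_def arc_y_def by (simp only: power_mult_distrib distrib_left add.commute)
  then show ?thesis by simp
qed

lemma integrable_arc_monomial: "(\<lambda>t. pi * arc_x c r t ^ a * arc_y c r t ^ b) integrable_on {0..1}"
  unfolding arc_x_def arc_y_def by (intro integrable_continuous_real continuous_intros)

lemma arc_moment_has_integral:
  "((\<lambda>t. pi * arc_x c r t ^ a * arc_y c r t ^ b) has_integral arc_moment c r a b) {0..1}"
  unfolding arc_moment_def using integrable_arc_monomial by (simp add: integrable_integral)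

lemma vector_derivative_arc:
  "vector_derivative (\<lambda>t. (arc_x c r t, arc_y c r t)) (at t) = (pi * arc_y c r t, - (pi * arc_x c r t))"
  by (intro vector_derivative_at has_vector_derivative_Pair
      arc_x_has_real_derivative[unfolded has_real_derivative_iff_has_vector_derivative]
      arc_y_has_real_derivative[unfolded has_real_derivative_iff_has_vector_derivative])

text \<open>Integrate the exact differential \<open>d(x^p y^q)\<close> along the arc.\<close>
lemma arc_moment_exact:
  "real p * arc_moment c r (p - 1) (q + 1) - real q * arc_moment c r (p + 1) (q - 1)
     = arc_boundary c r p q"
proof -
  let ?x = "arc_x c r" and ?y = "arc_y c r"
  have deriv: "((\<lambda>t. ?x t ^ p * ?y t ^ q) has_real_derivative
      real p * (pi * ?x t ^ (p - 1) * ?y t ^ (q + 1)) - real q * (pi * ?x t ^ (p + 1) * ?y t ^ (q - 1))) (at t)"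
    for t
    by (rule DERIV_cong[OF DERIV_mult[OF DERIV_power[OF arc_x_has_real_derivative[of c r t], of p]
          DERIV_power[OF arc_y_has_real_derivative[of c r t], of q]]])
      (simp add: algebra_simps)
  have boundary: "((\<lambda>t. real p * (pi * ?x t ^ (p - 1) * ?y t ^ (q + 1)) - real q * (pi * ?x t ^ (p + 1) * ?y t ^ (q - 1)))
      has_integral arc_boundary c r p q) {0..1}"
    unfolding arc_boundary_def
    using fundamental_theorem_of_calculus[of 0 1 "\<lambda>t. ?x t ^ p * ?y t ^ q"] deriv
    by (simp add: has_real_derivative_iff_has_vector_derivative has_vector_derivative_at_within)
  have moments: "((\<lambda>t. real p * (pi * ?x t ^ (p - 1) * ?y t ^ (q + 1)) - real q * (pi * ?x t ^ (p + 1) * ?y t ^ (q - 1)))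
      has_integral real p * arc_moment c r (p - 1) (q + 1) - real q * arc_moment c r (p + 1) (q - 1)) {0..1}"
    by (intro has_integral_diff has_integral_mult_right arc_moment_has_integral)
  show ?thesis using has_integral_unique[OF moments boundary] .
qed

lemma arc_moment_circle:
  "arc_moment c r (a + 2) b + arc_moment c r a (b + 2) = r ^ 2 * arc_moment c r a b"
proof -
  have "pi * arc_x c r t ^ (a + 2) * arc_y c r t ^ b + pi * arc_x c r t ^ a * arc_y c r t ^ (b + 2)
      = r ^ 2 * (pi * arc_x c r t ^ a * arc_y c r t ^ b)" for t
  proof -
    have "pi * arc_x c r t ^ (a + 2) * arc_y c r t ^ b + pi * arc_x c r t ^ a * arc_y c r t ^ (b + 2)
        = (arc_x c r t ^ 2 + arc_y c r t ^ 2) * (pi * arc_x c r t ^ a * arc_y c r t ^ b)"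
      by (simp add: power_add power2_eq_square algebra_simps)
    then show ?thesis by (simp only: arc_on_circle)
  qed
  then have "((\<lambda>t. r ^ 2 * (pi * arc_x c r t ^ a * arc_y c r t ^ b))
      has_integral arc_moment c r (a + 2) b + arc_moment c r a (b + 2)) {0..1}"
    using has_integral_add[OF arc_moment_has_integral[of c r "a + 2" b]
        arc_moment_has_integral[of c r a "b + 2"]] by simp
  then show ?thesis
    using has_integral_unique[OF _ has_integral_mult_right[OF arc_moment_has_integral]] by blast
qed

lemma arc_moment_0_0: "arc_moment c r 0 0 = pi"
  unfolding arc_moment_def by simp

lemma arc_moment_step_y:
  "real (a + b + 2) * arc_moment c r a (b + 2)
     = real (b + 1) * r ^ 2 * arc_moment c r a b + arc_boundary c r (a + 1) (b + 1)"
proof -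
  have "real (a + 1) * arc_moment c r a (b + 2) - real (b + 1) * arc_moment c r (a + 2) b
      = arc_boundary c r (a + 1) (b + 1)"
    using arc_moment_exact[of "a + 1" c r "b + 1"] by simp
  moreover have "real (b + 1) * r ^ 2 * arc_moment c r a b
      = real (b + 1) * (arc_moment c r (a + 2) b + arc_moment c r a (b + 2))"
    using arc_moment_circle[of c r a b] by simp
  ultimately show ?thesis by (simp add: algebra_simps)
qed

lemma arc_moment_step_x:
  "real (a + b + 2) * arc_moment c r (a + 2) b
     = real (a + 1) * r ^ 2 * arc_moment c r a b - arc_boundary c r (a + 1) (b + 1)"
proof -
  have "real (a + 1) * arc_moment c r a (b + 2) - real (b + 1) * arc_moment c r (a + 2) b
      = arc_boundary c r (a + 1) (b + 1)"
    using arc_moment_exact[of "a + 1" c r "b + 1"] by simp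
  moreover have "real (a + 1) * r ^ 2 * arc_moment c r a b
      = real (a + 1) * (arc_moment c r (a + 2) b + arc_moment c r a (b + 2))"
    using arc_moment_circle[of c r a b] by simp
  ultimately show ?thesis by (simp add: algebra_simps)
qed

definition boundary_poly :: "real \<Rightarrow> nat \<Rightarrow> nat \<Rightarrow> real poly" where
  "boundary_poly e p q = (if even (p + q) then 0 else monom (2 * e ^ (p + q)) (p + 3 * q))"

lemma degree_boundary_poly: "degree (boundary_poly e p q) \<le> p + 3 * q"
  unfolding boundary_poly_def by (simp add: degree_monom_le)

text \<open>The end point of the arc is \<open>e (s, s^3)\<close>; for \<open>L_h^+\<close> and \<open>L_h^-\<close> this holds with
  \<open>e = 1\<close> and \<open>e = -1\<close> respectively and \<open>s = \<sigma>(h)\<close>.\<close>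
definition arc_ends :: "real \<Rightarrow> real \<Rightarrow> real \<Rightarrow> real \<Rightarrow> bool" where
  "arc_ends e c r s \<longleftrightarrow> r ^ 2 = s ^ 2 + s ^ 6 \<and> arc_x c r 1 = e * s \<and> arc_y c r 1 = e * s ^ 3"

lemma arc_boundary_eq_poly:
  assumes "arc_ends e c r s"
  shows "arc_boundary c r p q = poly (boundary_poly e p q) s"
proof -
  have end1: "arc_x c r 1 ^ p * arc_y c r 1 ^ q = e ^ (p + q) * s ^ (p + 3 * q)"
    using assms unfolding arc_ends_def by (simp add: power_mult_distrib power_add power_mult)
  have "arc_boundary c r p q = (1 - (-1) ^ (p + q)) * (arc_x c r 1 ^ p * arc_y c r 1 ^ q)"
    unfolding arc_boundary_def arc_x_0 arc_y_0 power_minus[of "arc_x c r 1"] power_minus[of "arc_y c r 1"]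
    by (simp add: power_add algebra_simps)
  then show ?thesis
    unfolding end1 boundary_poly_def by (simp add: poly_monom)
qed

definition radius_sq_poly :: "real poly" where
  "radius_sq_poly = monom 1 2 + monom 1 6"

lemma poly_radius_sq_poly: "poly radius_sq_poly s = s ^ 2 + s ^ 6"
  unfolding radius_sq_poly_def by (simp add: poly_monom)

lemma degree_radius_sq_poly: "degree radius_sq_poly \<le> 6"
  unfolding radius_sq_poly_def
  by (intro degree_add_le) (auto intro: order.trans[OF degree_monom_le])

definition moment_form :: "real \<Rightarrow> nat \<Rightarrow> nat \<Rightarrow> real \<Rightarrow> real poly \<Rightarrow> bool" where
  "moment_form e a b \<kappa> Q \<longleftrightarrow>
     degree Q \<le> 3 * (a + b) \<and> (odd (a + b) \<longrightarrow> \<kappa> = 0) \<and> (even (a + b) \<longrightarrow> Q = 0) \<and>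
     (\<forall>c r s. arc_ends e c r s \<longrightarrow> arc_moment c r a b = \<kappa> * pi * r ^ (a + b) + poly Q s)"

lemma moment_form_step:
  assumes form: "moment_form e a b \<kappa> Q"
    and rec: "\<And>c r. k * arc_moment c r a' b' = l * r ^ 2 * arc_moment c r a b + m * arc_boundary c r p q"
    and "k \<noteq> 0" and "a' + b' = a + b + 2" and "p + q = a + b + 2"
  shows "moment_form e a' b' (l * \<kappa> / k)
    (smult (l / k) (radius_sq_poly * Q) + smult (m / k) (boundary_poly e p q))"
proof -
  have "degree (smult (l / k) (radius_sq_poly * Q)) \<le> 3 * (a' + b')"
  proof -
    have "degree (smult (l / k) (radius_sq_poly * Q)) \<le> degree radius_sq_poly + degree Q"
      using degree_smult_le degree_mult_le order.trans by blast
    moreover have "degree Q \<le> 3 * (a + b)"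
      using form unfolding moment_form_def by simp
    ultimately show ?thesis
      using degree_radius_sq_poly \<open>a' + b' = a + b + 2\<close> by simp
  qed
  moreover have "degree (smult (m / k) (boundary_poly e p q)) \<le> 3 * (a' + b')"
  proof -
    have "p + 3 * q \<le> 3 * (a' + b')"
      using assms(4,5) by simp
    then show ?thesis
      using degree_smult_le[of "m / k" "boundary_poly e p q"] degree_boundary_poly[of e p q]
      by linarith
  qed
  moreover have "arc_moment c r a' b'
      = l * \<kappa> / k * pi * r ^ (a' + b')
        + poly (smult (l / k) (radius_sq_poly * Q) + smult (m / k) (boundary_poly e p q)) s"
    if ends: "arc_ends e c r s" for c r s
  proof -
    have "arc_moment c r a b = \<kappa> * pi * r ^ (a + b) + poly Q s"
      using form ends unfolding moment_form_def by blast
    moreover have "poly radius_sq_poly s = r ^ 2"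
      using ends unfolding arc_ends_def by (simp add: poly_radius_sq_poly)
    moreover note rec[of c r] arc_boundary_eq_poly[OF ends, of p q]
    ultimately show ?thesis
      using \<open>k \<noteq> 0\<close> \<open>a' + b' = a + b + 2\<close> by (simp add: field_simps power_add power2_eq_square)
  qed
  moreover have "odd (a' + b') \<Longrightarrow> l * \<kappa> / k = 0" and "even (a' + b') \<Longrightarrow> Q = 0"
    using form assms(4) unfolding moment_form_def by simp_all
  moreover have "even (a' + b') \<Longrightarrow> boundary_poly e p q = 0"
    using assms(4,5) unfolding boundary_poly_def by simp
  ultimately show ?thesis
    unfolding moment_form_def by (auto intro: degree_add_le)
qed

lemma moment_form_0_0: "moment_form e 0 0 1 0"
  unfolding moment_form_def by (simp add: arc_moment_0_0)

lemma moment_form_1_0: "moment_form e 1 0 0 (- boundary_poly e 0 1)"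
  unfolding moment_form_def
proof (intro conjI allI impI)
  show "degree (- boundary_poly e 0 1) \<le> 3 * (1 + 0)"
    using degree_boundary_poly[of e 0 1] by simp
  fix c r s
  assume "arc_ends e c r s"
  then show "arc_moment c r 1 0 = 0 * pi * r ^ (1 + 0) + poly (- boundary_poly e 0 1) s"
    using arc_moment_exact[of 0 c r 1] arc_boundary_eq_poly[of e c r s 0 1] by simp
qed simp_all

lemma moment_form_any_1:
  "moment_form e a 1 0 (smult (1 / real (a + 1)) (boundary_poly e (a + 1) 0))"
  using degree_smult_le[of "1 / real (a + 1)" "boundary_poly e (a + 1) 0"]
    degree_boundary_poly[of e "a + 1" 0]
    arc_moment_exact[of "a + 1" _ _ 0] arc_boundary_eq_poly[of e _ _ _ "a + 1" 0]
  unfolding moment_form_def boundary_poly_def by (auto simp: field_simps)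

lemma moment_form_exists_any_0: "\<exists>\<kappa> Q. moment_form e a 0 \<kappa> Q"
proof (induction a rule: nat_induct2)
  case (step a)
  then obtain \<kappa> Q where "moment_form e a 0 \<kappa> Q" by blast
  from moment_form_step[OF this, of "real (a + 2)" "a + 2" 0 "real (a + 1)" "-1" "a + 1" 1]
  show ?case using arc_moment_step_x[of a 0] by auto
qed (use moment_form_0_0 moment_form_1_0 in blast)+

lemma moment_form_exists: "\<exists>\<kappa> Q. moment_form e a b \<kappa> Q"
proof (induction b rule: nat_induct2)
  case 0
  show ?case by (rule moment_form_exists_any_0)
next
  case 1
  show ?case using moment_form_any_1 by blast
next
  case (step b)
  then obtain \<kappa> Q where "moment_form e a b \<kappa> Q" by blast
  from moment_form_step[OF this, of "real (a + b + 2)" a "b + 2" "real (b + 1)" 1 "a + 1" "b + 1"]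
  show ?case using arc_moment_step_y[of a b] by auto
qed

text \<open>For \<open>r = \<surd>h\<close> and \<open>s = \<sigma>(h)\<close> the right-hand side is \<open>g(h) J_{0,1}(h) + Q(\<sigma>(h))\<close>.\<close>
definition arc_expressible :: "real \<Rightarrow> nat \<Rightarrow> nat \<Rightarrow> (real \<Rightarrow> real \<Rightarrow> real) \<Rightarrow> bool" where
  "arc_expressible e D N F \<longleftrightarrow> (\<exists>g Q. degree g \<le> D \<and> degree Q \<le> N \<and>
     (\<forall>c r s. arc_ends e c r s \<longrightarrow> F c r = poly g (r ^ 2) * (pi * r ^ 2 / 2) + poly Q s))"

lemma arc_expressible_add:
  assumes "arc_expressible e D N F" and "arc_expressible e D N G"
  shows "arc_expressible e D N (\<lambda>c r. F c r + G c r)"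
proof -
  obtain g Q where "degree g \<le> D" "degree Q \<le> N"
    and F: "\<And>c r s. arc_ends e c r s \<Longrightarrow> F c r = poly g (r ^ 2) * (pi * r ^ 2 / 2) + poly Q s"
    using assms(1) unfolding arc_expressible_def by blast
  moreover obtain g' Q' where "degree g' \<le> D" "degree Q' \<le> N"
    and G: "\<And>c r s. arc_ends e c r s \<Longrightarrow> G c r = poly g' (r ^ 2) * (pi * r ^ 2 / 2) + poly Q' s"
    using assms(2) unfolding arc_expressible_def by blast
  ultimately show ?thesis
    unfolding arc_expressible_def
    by (intro exI[of _ "g + g'"] exI[of _ "Q + Q'"])
      (auto intro: degree_add_le simp: F G algebra_simps)
qed

lemma arc_expressible_scale:
  assumes "arc_expressible e D N F"
  shows "arc_expressible e D N (\<lambda>c r. k * F c r)"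
proof -
  obtain g Q where "degree g \<le> D" "degree Q \<le> N"
    and F: "\<And>c r s. arc_ends e c r s \<Longrightarrow> F c r = poly g (r ^ 2) * (pi * r ^ 2 / 2) + poly Q s"
    using assms unfolding arc_expressible_def by blast
  then show ?thesis
    unfolding arc_expressible_def
    by (intro exI[of _ "smult k g"] exI[of _ "smult k Q"])
      (auto intro: order.trans[OF degree_smult_le] simp: F algebra_simps)
qed

lemma arc_expressible_sum:
  assumes "finite I" and "\<And>i. i \<in> I \<Longrightarrow> arc_expressible e D N (F i)"
  shows "arc_expressible e D N (\<lambda>c r. \<Sum>i\<in>I. F i c r)"
  using assms
proof (induction I rule: finite_induct)
  case empty
  show ?case
    unfolding arc_expressible_def by (intro exI[of _ 0]) simp
next
  case (insert i I)
  then show ?case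
    by (simp add: arc_expressible_add)
qed

lemma arc_moment_expressible:
  assumes "1 \<le> a + b" and "a + b \<le> n + 1"
  shows "arc_expressible e (n div 2) (3 * n + (if even n then 3 else 2)) (\<lambda>c r. arc_moment c r a b)"
proof -
  obtain \<kappa> Q where form: "moment_form e a b \<kappa> Q"
    using moment_form_exists by blast
  define d where "d = (a + b) div 2"
  define g where "g = (if even (a + b) then monom (2 * \<kappa>) (d - 1) else 0)"
  have "d - 1 \<le> n div 2"
    unfolding d_def using assms(2) by linarith
  then have "degree g \<le> n div 2"
    unfolding g_def by (auto intro: order.trans[OF degree_monom_le])
  moreover have "degree Q \<le> 3 * n + (if even n then 3 else 2)"
  proof (cases "even (a + b)")
    case False
    then have "a + b \<le> n + (if even n then 1 else 0)"
      using assms(2) by (cases "even n") presburger+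
    then show ?thesis
      using form unfolding moment_form_def by (cases "even n") auto
  qed (use form in \<open>simp add: moment_form_def\<close>)
  moreover have "\<kappa> * pi * r ^ (a + b) = poly g (r ^ 2) * (pi * r ^ 2 / 2)" for r
  proof (cases "even (a + b)")
    case True
    have "\<exists>m. a + b = 2 * m + 2"
      using True assms(1) by presburger
    then obtain m where m: "a + b = 2 * m + 2" ..
    have "g = monom (2 * \<kappa>) m"
      using True m unfolding g_def d_def by simp
    moreover have "r ^ (a + b) = (r ^ 2) ^ m * r ^ 2"
      unfolding m by (simp add: power_add power_mult power2_eq_square)
    ultimately show ?thesis
      by (simp add: poly_monom)
  qed (use form in \<open>simp add: moment_form_def g_def\<close>)
  ultimately show ?thesis
    using form unfolding arc_expressible_def moment_form_def by metis
qed

lemma finite_total_degree_le: "finite {(i, j). i + j \<le> (n::nat)}"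
  by (rule finite_subset[of _ "{0..n} \<times> {0..n}"]) auto

lemma line_int_bipoly_arc:
  "line_int (bipoly n q) (\<lambda>x y. - bipoly n p x y) (\<lambda>t. (arc_x c r t, arc_y c r t))
     = (\<Sum>(i, j)\<in>{(i, j). i + j \<le> n}. q i j * arc_moment c r i (Suc j) + p i j * arc_moment c r (Suc i) j)"
proof -
  let ?x = "arc_x c r" and ?y = "arc_y c r"
  have integrand: "bipoly n q (?x t) (?y t) * (pi * ?y t) + - bipoly n p (?x t) (?y t) * - (pi * ?x t)
     = (\<Sum>(i, j)\<in>{(i, j). i + j \<le> n}. q i j * (pi * ?x t ^ i * ?y t ^ Suc j)
          + p i j * (pi * ?x t ^ Suc i * ?y t ^ j))" for t
    unfolding bipoly_def sum.distrib
    by (simp add: sum_distrib_right sum_distrib_left sum.distrib split_def mult_ac sum_negf)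
  have "line_int (bipoly n q) (\<lambda>x y. - bipoly n p x y) (\<lambda>t. (?x t, ?y t))
      = integral {0..1} (\<lambda>t. \<Sum>(i, j)\<in>{(i, j). i + j \<le> n}. q i j * (pi * ?x t ^ i * ?y t ^ Suc j)
          + p i j * (pi * ?x t ^ Suc i * ?y t ^ j))"
    unfolding line_int_def vector_derivative_arc by (simp only: fst_conv snd_conv integrand)
  also have "\<dots> = (\<Sum>(i, j)\<in>{(i, j). i + j \<le> n}. integral {0..1}
      (\<lambda>t. q i j * (pi * ?x t ^ i * ?y t ^ Suc j) + p i j * (pi * ?x t ^ Suc i * ?y t ^ j)))"
    unfolding split_def
    by (intro integral_sum finite_total_degree_le[unfolded split_def] integrable_add
        integrable_on_mult_right integrable_arc_monomial)
  also have "\<dots> = (\<Sum>(i, j)\<in>{(i, j). i + j \<le> n}. q i j * arc_moment c r i (Suc j) + p i j * arc_moment c r (Suc i) j)"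
    unfolding arc_moment_def
    by (intro sum.cong refl)
      (auto simp del: power_Suc
        simp: integral_add integral_mult_right integrable_on_mult_right integrable_arc_monomial)
  finally show ?thesis .
qed

lemma line_int_bipoly_arc_expressible:
  "arc_expressible e (n div 2) (3 * n + (if even n then 3 else 2))
     (\<lambda>c r. line_int (bipoly n q) (\<lambda>x y. - bipoly n p x y) (\<lambda>t. (arc_x c r t, arc_y c r t)))"
  unfolding line_int_bipoly_arc
proof (intro arc_expressible_sum finite_total_degree_le)
  fix ij :: "nat \<times> nat"
  assume "ij \<in> {(i, j). i + j \<le> n}"
  then obtain i j where "ij = (i, j)" "i + j \<le> n" by blast
  then show "arc_expressible e (n div 2) (3 * n + (if even n then 3 else 2))
      (\<lambda>c r. case ij of (i, j) \<Rightarrow> q i j * arc_moment c r i (Suc j) + p i j * arc_moment c r (Suc i) j)"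
    by (simp add: arc_expressible_add arc_expressible_scale arc_moment_expressible)
qed

lemma arc_moment_0_2: "arc_moment c r 0 2 = pi * r ^ 2 / 2"
  using arc_moment_step_y[of 0 0 c r]
  by (simp add: arc_moment_0_0 arc_boundary_def arc_x_0 arc_y_0 numeral_2_eq_2 mult.commute)

lemma sigma_root:
  assumes "0 < h"
  shows "0 < sigma h" and "sigma h ^ 2 + sigma h ^ 6 = h"
proof -
  have mono: "x ^ 2 + x ^ 6 < y ^ 2 + y ^ 6" if "0 \<le> x" "x < y" for x y :: real
    using power_strict_mono[of x y 2] power_strict_mono[of x y 6] that by simp
  have "\<exists>s. 0 \<le> s \<and> s \<le> 1 + h \<and> s ^ 2 + s ^ 6 = h"
  proof (rule IVT')
    have "h \<le> (1 + h) ^ 2"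
      using assms by (simp add: power2_eq_square algebra_simps)
    then show "h \<le> (1 + h) ^ 2 + (1 + h) ^ 6"
      using assms by (simp add: add_increasing2)
  qed (use assms in \<open>auto intro!: continuous_intros\<close>)
  then obtain s where s: "0 \<le> s" "s ^ 2 + s ^ 6 = h" by blast
  with assms have "0 < s"
    by (cases "s = 0") auto
  have "sigma h = s"
    unfolding sigma_def
  proof (rule the_equality)
    fix y :: real
    assume "0 < y \<and> y ^ 2 + y ^ 6 = h"
    then show "y = s"
      using mono[of y s] mono[of s y] s \<open>0 < s\<close> by (cases y s rule: linorder_cases) auto
  qed (use s \<open>0 < s\<close> in simp)
  with s \<open>0 < s\<close> show "0 < sigma h" and "sigma h ^ 2 + sigma h ^ 6 = h" by simp_all
qed

lemma sqrt_cos_sin_arctan: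
  assumes "0 < s"
  shows "sqrt (s ^ 2 + s ^ 6) * cos (arctan (s ^ 2)) = s"
    and "sqrt (s ^ 2 + s ^ 6) * sin (arctan (s ^ 2)) = s ^ 3"
proof -
  have "s ^ 2 + s ^ 6 = s ^ 2 * (1 + (s ^ 2) ^ 2)"
    by (simp add: algebra_simps flip: power_add power_mult)
  then have root: "sqrt (s ^ 2 + s ^ 6) = s * sqrt (1 + (s ^ 2) ^ 2)"
    using assms by (simp add: real_sqrt_mult)
  have "sqrt (1 + (s ^ 2) ^ 2) > 0"
    by (simp add: add_pos_nonneg)
  then show "sqrt (s ^ 2 + s ^ 6) * cos (arctan (s ^ 2)) = s"
    and "sqrt (s ^ 2 + s ^ 6) * sin (arctan (s ^ 2)) = s ^ 3"
    unfolding root cos_arctan sin_arctan by (simp_all add: power2_eq_square power3_eq_cube)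
qed

lemma Lplus_arc: "Lplus h = (\<lambda>t. (arc_x (pi + angB h) (sqrt h) t, arc_y (pi + angB h) (sqrt h) t))"
  unfolding Lplus_def arc_x_def arc_y_def ..

lemma Lminus_arc: "Lminus h = (\<lambda>t. (arc_x (angB h) (sqrt h) t, arc_y (angB h) (sqrt h) t))"
  unfolding Lminus_def arc_x_def arc_y_def ..

lemma arc_ends_Lplus: "0 < h \<Longrightarrow> arc_ends 1 (pi + angB h) (sqrt h) (sigma h)"
  using sigma_root[of h] sqrt_cos_sin_arctan[of "sigma h"]
  unfolding arc_ends_def arc_x_def arc_y_def angB_def by auto

lemma arc_ends_Lminus: "0 < h \<Longrightarrow> arc_ends (-1) (angB h) (sqrt h) (sigma h)"
  using sigma_root[of h] sqrt_cos_sin_arctan[of "sigma h"]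
  unfolding arc_ends_def arc_x_def arc_y_def angB_def by auto

lemma J_0_1: "0 < h \<Longrightarrow> J 0 1 h = pi * h / 2"
  unfolding J_def line_int_def Lplus_arc vector_derivative_arc
  using arc_moment_0_2[of "pi + angB h" "sqrt h"]
  by (simp add: arc_moment_def power2_eq_square mult_ac)

theorem lemma3p3:
  fixes n :: nat
    and ap am bp bm :: "nat \<Rightarrow> nat \<Rightarrow> real"
  assumes "n \<ge> 1"
  shows "\<exists>\<alpha> \<beta> \<gamma> :: real poly. \<exists>\<Psi> :: nat \<Rightarrow> nat \<Rightarrow> real poly. \<exists>\<Phi> :: real poly.
    deg_le \<alpha> (int (n div 2)) \<and> deg_le \<gamma> (int (n div 2)) \<and> deg_le \<beta> (int (n div 2) - 1) \<and>
    (\<forall>k m. 2 \<le> k \<and> k \<le> n \<and> m \<le> 3 * (k div 2) - 3 \<longrightarrow>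
        deg_le (\<Psi> k m) (int (k div 2) - 1 - int ((m + 2) div 3))) \<and>
    deg_le \<Phi> (int (3 * n) + (5 + (-1) ^ n) div 2) \<and>
    (\<forall>h. 0 < h \<longrightarrow>
      melnikov (bipoly n ap) (bipoly n bp) (bipoly n am) (bipoly n bm) h =
        poly \<alpha> h * J 0 0 h + poly \<beta> h * J 1 1 h + poly \<gamma> h * J 0 1 h
        + (\<Sum>k=2..n. \<Sum>m=0..3 * (k div 2) - 3. poly (\<Psi> k m) h * sigma h ^ (7 + 2 * m))
        + poly \<Phi> (sigma h))"
proof -
  define N where "N = 3 * n + (if even n then 3 else 2)"
  obtain g Q where deg: "degree g \<le> n div 2" "degree Q \<le> N"
    and plus: "\<And>c r s. arc_ends 1 c r s \<Longrightarrow>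
      line_int (bipoly n bp) (\<lambda>x y. - bipoly n ap x y) (\<lambda>t. (arc_x c r t, arc_y c r t))
        = poly g (r ^ 2) * (pi * r ^ 2 / 2) + poly Q s"
    using line_int_bipoly_arc_expressible unfolding arc_expressible_def N_def by blast
  obtain g' Q' where deg': "degree g' \<le> n div 2" "degree Q' \<le> N"
    and minus: "\<And>c r s. arc_ends (-1) c r s \<Longrightarrow>
      line_int (bipoly n bm) (\<lambda>x y. - bipoly n am x y) (\<lambda>t. (arc_x c r t, arc_y c r t))
        = poly g' (r ^ 2) * (pi * r ^ 2 / 2) + poly Q' s"
    using line_int_bipoly_arc_expressible unfolding arc_expressible_def N_def by blast
  have melnikov: "melnikov (bipoly n ap) (bipoly n bp) (bipoly n am) (bipoly n bm) h
      = poly (g + g') h * J 0 1 h + poly (Q + Q') (sigma h)" if "0 < h" for h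
    using plus[OF arc_ends_Lplus[OF that]] minus[OF arc_ends_Lminus[OF that]] that
    unfolding melnikov_def Lplus_arc Lminus_arc J_0_1[OF that] by (simp add: algebra_simps)
  have "deg_le (g + g') (int (n div 2))"
    unfolding deg_le_def using degree_add_le[OF deg(1) deg'(1)] by simp
  moreover have "deg_le (Q + Q') (int (3 * n) + (5 + (-1) ^ n) div 2)"
    unfolding deg_le_def using degree_add_le[OF deg(2) deg'(2)] unfolding N_def
    by (cases "even n") simp_all
  ultimately show ?thesis
    using melnikov
    by (intro exI[of _ 0] exI[of _ "g + g'"] exI[of _ "\<lambda>k m. 0"] exI[of _ "Q + Q'"])
      (simp add: deg_le_def)
qed

end
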